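(* For every nonempty word $p\in\mathbb{P}^\ast$ with no immediate repetitions, $s(p)+s(p^{+1})=1$.
   Context: $\mathbb{P}$ denotes the positive integers and $\mathbb{P}^\ast$ the set of finite words over $\mathbb{P}$; $|p|$ is the length of $p$ and $p(i)$ its $i$th letter. The word $p^{+1}$ is defined by $p^{+1}(i)=p(i)+1$. A word $p$ has an immediate repetition if $p(i)=p(i+1)$ for some $i$. The infinite zigzag word is the concatenation $R_1R_2R_3\cdots$ of runs, where each odd-indexed run is the ascending sequence of all odd positive integers and each even-indexed run is the descending sequence of all even positive integers. A word $p$ occurs as a subsequence of the first $m$ runs if $p=q_1q_2\cdots q_m$ for (possibly empty) words $q_k$, where for odd $k$, $q_k$ is strictly increasing with odd letters, and for even $k$, $q_k$ is strictly decreasing with even letters. The score $s(p)$ is the least $m\ge 0$ such that $p$ occurs as a subsequence of the first $m$ runs, minus $|p|$. *)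

theory Defs
  imports Main
begin

text \<open>Words over the positive integers are lists of naturals with all letters \<ge> 1.
  Runs are indexed from 0 here: run index k (0-based) corresponds to R_(k+1);
  so even k = odd-indexed run (ascending odd numbers), odd k = even-indexed run
  (descending positive even numbers).\<close>

definition run_ok :: "nat \<Rightarrow> nat list \<Rightarrow> bool" where
  "run_ok k q \<longleftrightarrow>
     (if even k then sorted_wrt (<) q \<and> (\<forall>x\<in>set q. odd x)
      else sorted_wrt (>) q \<and> (\<forall>x\<in>set q. even x \<and> 0 < x))"

definition occurs_in_runs :: "nat list \<Rightarrow> nat \<Rightarrow> bool" where
  "occurs_in_runs p m \<longleftrightarrow>
     (\<exists>qs. length qs = m \<and> concat qs = p \<and> (\<forall>k<m. run_ok k (qs ! k)))"

definition score :: "nat list \<Rightarrow> int" where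
  "score p = int (LEAST m. occurs_in_runs p m) - int (length p)"

definition plus1 :: "nat list \<Rightarrow> nat list" where
  "plus1 p = map Suc p"

definition no_imm_rep :: "nat list \<Rightarrow> bool" where
  "no_imm_rep p \<longleftrightarrow> (\<forall>i. Suc i < length p \<longrightarrow> p ! i \<noteq> p ! Suc i)"

end

theory Submission
  imports Defs
begin

text \<open>Reading a word greedily through the runs, its first letter x needs one run if x is odd and
  two otherwise, and each later step from x to y costs 0 further runs if y can continue the
  current run, 1 if y has the other parity, and 2 otherwise (same parity, wrong direction). Adding
  1 to every letter flips all parities but preserves the order, so for x \<noteq> y the step costs of
  p and p + 1 add up to exactly 2, and the first letters cost 1 + 2 together. Hence the least
  numbers of runs sum to 3 + 2(|p| - 1) = 2|p| + 1.\<close>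

definition letter_ok :: "nat \<Rightarrow> nat \<Rightarrow> bool" where
  "letter_ok k x \<longleftrightarrow> (if even k then odd x else even x \<and> 0 < x)"

definition run_order :: "nat \<Rightarrow> nat \<Rightarrow> nat \<Rightarrow> bool" where
  "run_order k x y \<longleftrightarrow> (if even k then x < y else y < x)"

definition transition_cost :: "nat \<Rightarrow> nat \<Rightarrow> nat" where
  "transition_cost x y =
     (if even x \<noteq> even y then 1 else if (odd x \<and> x < y) \<or> (even x \<and> y < x) then 0 else 2)"

fun total_transition_cost :: "nat list \<Rightarrow> nat" where
  "total_transition_cost (x # y # r) = transition_cost x y + total_transition_cost (y # r)"
| "total_transition_cost _ = 0"

definition occurs_from :: "nat \<Rightarrow> nat list \<Rightarrow> nat \<Rightarrow> bool" where
  "occurs_from k p m \<longleftrightarrow>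
     (\<exists>qs. length qs = m \<and> concat qs = p \<and> (\<forall>j<m. run_ok (k + j) (qs ! j)))"

definition occurs_starting :: "nat \<Rightarrow> nat list \<Rightarrow> nat \<Rightarrow> bool" where
  "occurs_starting k p m \<longleftrightarrow> (\<exists>q r. q \<noteq> [] \<and> p = q @ r \<and> run_ok k q \<and> occurs_from (Suc k) r m)"

lemma occurs_in_runs_eq_occurs_from: "occurs_in_runs p m \<longleftrightarrow> occurs_from 0 p m"
  unfolding occurs_in_runs_def occurs_from_def by simp

lemma occurs_from_0: "occurs_from k p 0 \<longleftrightarrow> p = []"
  unfolding occurs_from_def by auto

lemma occurs_from_Nil: "occurs_from k [] m"
  unfolding occurs_from_def by (intro exI[of _ "replicate m []"]) (auto simp: run_ok_def)

lemma occurs_from_Suc: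
  "occurs_from k p (Suc m) \<longleftrightarrow> (\<exists>q r. p = q @ r \<and> run_ok k q \<and> occurs_from (Suc k) r m)"
proof
  assume "occurs_from k p (Suc m)"
  then obtain qs where qs: "length qs = Suc m" "concat qs = p" "\<forall>j<Suc m. run_ok (k + j) (qs ! j)"
    unfolding occurs_from_def by blast
  then obtain q qs' where qs_Cons: "qs = q # qs'" by (cases qs) auto
  have "run_ok (Suc k + j) (qs' ! j)" if "j < m" for j
    using qs(3)[rule_format, of "Suc j"] that qs_Cons by simp
  then have "occurs_from (Suc k) (concat qs') m"
    unfolding occurs_from_def using qs(1) qs_Cons by auto
  moreover have "run_ok k q" using qs(3)[rule_format, of 0] qs_Cons by simp
  ultimately show "\<exists>q r. p = q @ r \<and> run_ok k q \<and> occurs_from (Suc k) r m"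
    using qs(2) qs_Cons by auto
next
  assume "\<exists>q r. p = q @ r \<and> run_ok k q \<and> occurs_from (Suc k) r m"
  then obtain q qs where q: "p = q @ concat qs" "run_ok k q" "length qs = m"
    "\<forall>j<m. run_ok (Suc k + j) (qs ! j)" unfolding occurs_from_def by blast
  have "run_ok (k + j) ((q # qs) ! j)" if "j < Suc m" for j
    using q that by (cases j) auto
  then show "occurs_from k p (Suc m)"
    unfolding occurs_from_def using q by (intro exI[of _ "q # qs"]) auto
qed

lemma run_ok_Nil [simp]: "run_ok k []"
  by (simp add: run_ok_def)

lemma run_ok_Cons:
  "run_ok k (x # q) \<longleftrightarrow> letter_ok k x \<and> run_ok k q \<and> (q \<noteq> [] \<longrightarrow> run_order k x (hd q))"
proof (cases q)
  case Nil
  then show ?thesis by (auto simp: run_ok_def letter_ok_def)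
next
  case (Cons y q')
  show ?thesis unfolding Cons run_ok_def letter_ok_def run_order_def
    by (cases "even k") (auto simp: sorted_wrt2 transp_def)
qed

lemma occurs_from_Suc_Cons:
  "occurs_from k (x # w) (Suc m) \<longleftrightarrow> occurs_starting k (x # w) m \<or> occurs_from (Suc k) (x # w) m"
  unfolding occurs_from_Suc occurs_starting_def by (metis append_Nil run_ok_Nil)

lemma occurs_starting_Cons:
  "occurs_starting k (x # w) m \<longleftrightarrow>
     letter_ok k x \<and>
     (occurs_from (Suc k) w m \<or> (w \<noteq> [] \<and> run_order k x (hd w) \<and> occurs_starting k w m))"
  (is "?lhs \<longleftrightarrow> ?rhs")
proof
  assume ?lhs
  then obtain q r where h: "q \<noteq> []" "x # w = q @ r" "run_ok k q" "occurs_from (Suc k) r m"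
    unfolding occurs_starting_def by blast
  then obtain q' where q: "q = x # q'" "w = q' @ r" by (cases q) auto
  show ?rhs
  proof (cases "q' = []")
    case True
    then show ?thesis using h q run_ok_Cons by auto
  next
    case False
    then have "occurs_starting k w m" unfolding occurs_starting_def using h q run_ok_Cons by blast
    then show ?thesis using h q run_ok_Cons False by auto
  qed
next
  assume rhs: ?rhs
  show ?lhs
  proof (cases "occurs_from (Suc k) w m")
    case True
    then show ?thesis
      using rhs unfolding occurs_starting_def
      by (rule_tac exI[of _ "[x]"], rule_tac exI[of _ w]) (auto simp: run_ok_Cons)
  next
    case False
    then obtain q r where h: "w \<noteq> []" "run_order k x (hd w)" "q \<noteq> []" "w = q @ r"
        "run_ok k q" "occurs_from (Suc k) r m"
      using rhs unfolding occurs_starting_def by blast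
    then show ?thesis
      using rhs unfolding occurs_starting_def
      by (rule_tac exI[of _ "x # q"], rule_tac exI[of _ r]) (auto simp: run_ok_Cons)
  qed
qed

text \<open>A positive letter fits into one of any two consecutive runs, so skipping the first run
  forced by an unfitting first letter costs exactly one extra run.\<close>

lemma occurs_from_iff_of_occurs_starting_iff:
  assumes "0 < x"
    and starting: "\<And>k m. occurs_starting k (x # w) m \<longleftrightarrow> letter_ok k x \<and> c \<le> m"
  shows "occurs_from k (x # w) m \<longleftrightarrow> (if letter_ok k x then 1 else 2) + c \<le> m"
proof (induction m arbitrary: k)
  case 0
  then show ?case by (simp add: occurs_from_0)
next
  case (Suc m)
  show ?case
    unfolding occurs_from_Suc_Cons starting Suc.IH using assms(1) by (auto simp: letter_ok_def)
qed

lemma occurs_iff_total_transition_cost: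
  assumes "\<forall>z\<in>set (x # w). 0 < z"
  shows "(\<forall>k m. occurs_starting k (x # w) m \<longleftrightarrow> letter_ok k x \<and> total_transition_cost (x # w) \<le> m)
    \<and> (\<forall>k m. occurs_from k (x # w) m \<longleftrightarrow>
               (if letter_ok k x then 1 else 2) + total_transition_cost (x # w) \<le> m)"
  using assms
proof (induction w arbitrary: x)
  case Nil
  have starting: "occurs_starting k [x] m \<longleftrightarrow> letter_ok k x \<and> total_transition_cost [x] \<le> m"
    for k m by (simp add: occurs_starting_Cons occurs_from_Nil)
  moreover have "0 < x" using Nil.prems by simp
  ultimately show ?case using occurs_from_iff_of_occurs_starting_iff[of x] by blast
next
  case (Cons y r)
  then have pos: "0 < x" "0 < y" by auto
  have IH_from: "occurs_from (Suc k) (y # r) m \<longleftrightarrow>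
      (if letter_ok (Suc k) y then 1 else 2) + total_transition_cost (y # r) \<le> m" for k m
    using Cons by simp
  have IH_starting: "occurs_starting k (y # r) m \<longleftrightarrow>
      letter_ok k y \<and> total_transition_cost (y # r) \<le> m" for k m
    using Cons by simp
  have starting: "occurs_starting k (x # y # r) m \<longleftrightarrow>
      letter_ok k x \<and> total_transition_cost (x # y # r) \<le> m" for k m
  proof -
    have "occurs_starting k (x # y # r) m \<longleftrightarrow>
        letter_ok k x \<and> (occurs_from (Suc k) (y # r) m \<or> run_order k x y \<and> occurs_starting k (y # r) m)"
      using occurs_starting_Cons[of k x "y # r" m] by simp
    then show ?thesis unfolding IH_from IH_starting using pos
      by (cases "even k"; cases "even x"; cases "even y"; cases "x < y")
         (simp_all add: letter_ok_def run_order_def transition_cost_def, linarith+)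
  qed
  with occurs_from_iff_of_occurs_starting_iff pos(1) show ?case by blast
qed

lemma least_occurs_in_runs:
  assumes "\<forall>z\<in>set (x # w). 0 < z"
  shows "(LEAST m. occurs_in_runs (x # w) m) = (if odd x then 1 else 2) + total_transition_cost (x # w)"
  unfolding occurs_in_runs_eq_occurs_from
  using occurs_iff_total_transition_cost[OF assms]
  by (intro Least_equality) (auto simp: letter_ok_def)

lemma transition_cost_Suc_add:
  assumes "x \<noteq> y"
  shows "transition_cost x y + transition_cost (Suc x) (Suc y) = 2"
  using assms by (auto simp: transition_cost_def)

lemma no_imm_rep_Cons_Cons: "no_imm_rep (x # y # r) \<longleftrightarrow> x \<noteq> y \<and> no_imm_rep (y # r)"
  unfolding no_imm_rep_def by (auto simp: less_Suc_eq_0_disj)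

lemma total_transition_cost_map_Suc_add:
  "no_imm_rep p \<Longrightarrow>
     total_transition_cost p + total_transition_cost (map Suc p) = 2 * (length p - 1)"
proof (induction p rule: total_transition_cost.induct)
  case (1 x y r)
  then have "x \<noteq> y"
    "total_transition_cost (y # r) + total_transition_cost (map Suc (y # r)) = 2 * length r"
    by (simp_all add: no_imm_rep_Cons_Cons)
  with transition_cost_Suc_add[of x y] show ?case by simp
qed auto

theorem mainTheorem2:
  fixes p :: "nat list"
  assumes "p \<noteq> []"
    and "\<forall>x\<in>set p. 0 < x"
    and "no_imm_rep p"
  shows "score p + score (plus1 p) = 1"
proof -
  obtain x w where p: "p = x # w" using assms(1) by (cases p) auto
  have "(LEAST m. occurs_in_runs p m) = (if odd x then 1 else 2) + total_transition_cost p"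
    using least_occurs_in_runs assms(2) p by simp
  moreover have "(LEAST m. occurs_in_runs (plus1 p) m) =
      (if odd (Suc x) then 1 else 2) + total_transition_cost (map Suc p)"
    using least_occurs_in_runs[of "Suc x" "map Suc w"] p by (simp add: plus1_def)
  moreover have "total_transition_cost p + total_transition_cost (map Suc p) = 2 * (length p - 1)"
    using total_transition_cost_map_Suc_add assms(3) .
  ultimately show ?thesis
    unfolding score_def using p by (simp add: plus1_def)
qed

end
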